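(* Let $S$ be a Hausdorff pseudocompact semitopological semigroup which is an orthogonal sum $S=\sum_{i\in\mathscr I}B^0_{\lambda_i}(S_i)$ of topological Brandt $\lambda_i^0$-extensions of semitopological monoids $S_i$ with zeros. Then (i) for every $i\in\mathscr I$ the subspace $B^0_{\lambda_i}(S_i)$ is pseudocompact; (ii) for all $i\in\mathscr I$ and $\alpha_i,\beta_i\in\lambda_i$ the subspace $(S_i)_{\alpha_i,\beta_i}$ is pseudocompact.
   Context: All spaces are Hausdorff; a semitopological semigroup is a Hausdorff space with separately continuous associative operation; a space is pseudocompact if every locally finite family of non-empty open sets is finite. For a semigroup $T$ with zero $0_T$ and a cardinal $\lambda\ge1$, $B^0_\lambda(T)=(\lambda\times (T\setminus\{0_T\})\times\lambda)\cup\{0\}$ with $(\alpha,a,\beta)(\gamma,b,\delta)=(\alpha,ab,\delta)$ if $\beta=\gamma$ and $ab\ne0_T$, and $0$ otherwise, $0$ a zero. For $A\subseteq T$, $A_{\alpha,\beta}=\{(\alpha,s,\beta):s\in A\setminus\{0_T\}\}\cup\{0\}$ if $0_T\in A$ and $\{(\alpha,s,\beta):s\in A\}$ otherwise. A topological Brandt $\lambda^0$-extension of a semitopological monoid $T$ with zero is $B^0_\lambda(T)$ with a topology making it a semitopological semigroup such that for some $\alpha\in\lambda$ the map $s\mapsto(\alpha,s,\alpha)$ ($0_T\mapsto0$) is a homeomorphism $T\to T_{\alpha,\alpha}$. The orthogonal sum of semigroups $T_\iota$ with zeros is $\{0\}\cup\bigcup_\iota(T_\iota\setminus\{0_\iota\})$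 with products computed in $T_\iota$ when both factors lie in the same $T_\iota$ and the product is non-zero, and $0$ otherwise. *)

theory Defs
  imports "HOL-Analysis.Analysis"
begin

definition pseudocompact_space :: "'a topology \<Rightarrow> bool" where
  "pseudocompact_space X \<longleftrightarrow>
     (\<forall>\<U>. (\<forall>U\<in>\<U>. openin X U \<and> U \<noteq> {}) \<and> locally_finite_in X \<U> \<longrightarrow> finite \<U>)"

definition semitop_semigroup :: "'a topology \<Rightarrow> 'a set \<Rightarrow> ('a \<Rightarrow> 'a \<Rightarrow> 'a) \<Rightarrow> bool" where
  "semitop_semigroup X C m \<longleftrightarrow>
     topspace X = C \<and> Hausdorff_space X \<and>
     (\<forall>x\<in>C. \<forall>y\<in>C. m x y \<in> C) \<and>
     (\<forall>x\<in>C. \<forall>y\<in>C. \<forall>w\<in>C. m (m x y) w = m x (m y w)) \<and>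
     (\<forall>x\<in>C. continuous_map X X (m x) \<and> continuous_map X X (\<lambda>y. m y x))"

definition semitop_monoid_zero ::
  "'s topology \<Rightarrow> 's set \<Rightarrow> ('s \<Rightarrow> 's \<Rightarrow> 's) \<Rightarrow> 's \<Rightarrow> 's \<Rightarrow> bool" where
  "semitop_monoid_zero X T m e z \<longleftrightarrow>
     semitop_semigroup X T m \<and>
     e \<in> T \<and> (\<forall>x\<in>T. m e x = x \<and> m x e = x) \<and>
     z \<in> T \<and> (\<forall>x\<in>T. m z x = z \<and> m x z = z)"

text \<open>Elements of the orthogonal sum of Brandt extensions:
  the common zero, and triples (alpha, s, beta) tagged with the summand index i.\<close>
datatype ('i, 'c, 's) osum = OZero | OEl 'i 'c 's 'c

definition osum_carrier ::
  "'i set \<Rightarrow> ('i \<Rightarrow> 'c set) \<Rightarrow> ('i \<Rightarrow> 's set) \<Rightarrow> ('i \<Rightarrow> 's) \<Rightarrow> ('i, 'c, 's) osum set" where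
  "osum_carrier I \<Lambda> T z = insert OZero
     {OEl i a s b | i a s b. i \<in> I \<and> a \<in> \<Lambda> i \<and> b \<in> \<Lambda> i \<and> s \<in> T i \<and> s \<noteq> z i}"

definition osum_mult ::
  "('i \<Rightarrow> 's \<Rightarrow> 's \<Rightarrow> 's) \<Rightarrow> ('i \<Rightarrow> 's) \<Rightarrow> ('i, 'c, 's) osum \<Rightarrow> ('i, 'c, 's) osum \<Rightarrow> ('i, 'c, 's) osum" where
  "osum_mult m z x y =
     (case x of
        OZero \<Rightarrow> OZero
      | OEl i a s b \<Rightarrow>
          (case y of
             OZero \<Rightarrow> OZero
           | OEl j c t d \<Rightarrow>
               (if i = j \<and> b = c \<and> m i s t \<noteq> z i then OEl i a (m i s t) d else OZero)))"

definition brandt_part ::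
  "('i \<Rightarrow> 'c set) \<Rightarrow> ('i \<Rightarrow> 's set) \<Rightarrow> ('i \<Rightarrow> 's) \<Rightarrow> 'i \<Rightarrow> ('i, 'c, 's) osum set" where
  "brandt_part \<Lambda> T z i = insert OZero
     {OEl i a s b | a s b. a \<in> \<Lambda> i \<and> b \<in> \<Lambda> i \<and> s \<in> T i \<and> s \<noteq> z i}"

text \<open>(T i)_{a,b} (note 0_{T i} is in T i, so the zero is included).\<close>
definition brandt_block ::
  "('i \<Rightarrow> 's set) \<Rightarrow> ('i \<Rightarrow> 's) \<Rightarrow> 'i \<Rightarrow> 'c \<Rightarrow> 'c \<Rightarrow> ('i, 'c, 's) osum set" where
  "brandt_block T z i a b = insert OZero {OEl i a s b | s. s \<in> T i \<and> s \<noteq> z i}"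

definition brandt_embed :: "('i \<Rightarrow> 's) \<Rightarrow> 'i \<Rightarrow> 'c \<Rightarrow> 's \<Rightarrow> ('i, 'c, 's) osum" where
  "brandt_embed z i a s = (if s = z i then OZero else OEl i a s a)"

definition topological_brandt_ext ::
  "('i, 'c, 's) osum topology \<Rightarrow> ('i \<Rightarrow> 'c set) \<Rightarrow> ('i \<Rightarrow> 's set) \<Rightarrow>
   ('i \<Rightarrow> 's \<Rightarrow> 's \<Rightarrow> 's) \<Rightarrow> ('i \<Rightarrow> 's) \<Rightarrow> ('i \<Rightarrow> 's topology) \<Rightarrow> 'i \<Rightarrow> bool" where
  "topological_brandt_ext \<tau> \<Lambda> T m z \<sigma> i \<longleftrightarrow>
     \<Lambda> i \<noteq> {} \<and>
     semitop_semigroup (subtopology \<tau> (brandt_part \<Lambda> T z i)) (brandt_part \<Lambda> T z i) (osum_mult m z) \<and>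
     (\<exists>a\<in>\<Lambda> i. homeomorphic_map (\<sigma> i) (subtopology \<tau> (brandt_block T z i a a)) (brandt_embed z i a))"

end

theory Submission
  imports Defs
begin

text \<open>Every cell {(i, a, s, b) : s \<noteq> 0} of the orthogonal sum S is open: it is the preimage
  of S - {0}, open since S is Hausdorff, under the continuous map y \<mapsto> (i,a,1,a) y (i,b,1,b),
  which fixes the cell and sends everything else to 0. Hence B^0(S_i) and (S_i)_{a,b} are closed
  sets Y containing 0 with Y - {0} open in S. A locally finite family of non-empty open subsets
  of such a Y has only finitely many members through 0, and the remaining ones are open in S and
  locally finite there, hence finitely many by pseudocompactness of S.\<close>

lemma pseudocompact_space_closedin_punctured_open:
  assumes pc: "pseudocompact_space X" and Y: "closedin X Y" and p: "p \<in> Y"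
    and open_punct: "openin X (Y - {p})"
  shows "pseudocompact_space (subtopology X Y)"
  unfolding pseudocompact_space_def
proof (intro allI impI, elim conjE)
  fix \<U> assume opn: "\<forall>U\<in>\<U>. openin (subtopology X Y) U \<and> U \<noteq> {}"
    and lf: "locally_finite_in (subtopology X Y) \<U>"
  have sub: "U \<subseteq> Y" if "U \<in> \<U>" for U
    using opn that openin_subset by fastforce
  have "p \<in> topspace (subtopology X Y)"
    using p closedin_subset[OF Y] by auto
  then obtain V where V: "p \<in> V" "finite {U\<in>\<U>. U \<inter> V \<noteq> {}}"
    using lf unfolding locally_finite_in_def by blast
  have through_p: "finite {U\<in>\<U>. p \<in> U}"
    by (rule finite_subset[OF _ V(2)]) (use V(1) in blast)
  define \<U>' where "\<U>' = {U\<in>\<U>. p \<notin> U}"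
  have opn': "openin X U \<and> U \<noteq> {}" if "U \<in> \<U>'" for U
  proof -
    from that have U: "U \<in> \<U>" "p \<notin> U" unfolding \<U>'_def by auto
    then obtain W where W: "openin X W" "U = W \<inter> Y"
      using opn by (auto simp: openin_subtopology)
    then have "U = W \<inter> (Y - {p})" using U by blast
    then show ?thesis using W(1) open_punct opn U by (metis openin_Int)
  qed
  have "locally_finite_in X \<U>'"
    unfolding locally_finite_in_def
  proof (intro conjI ballI)
    show "\<Union> \<U>' \<subseteq> topspace X" using opn' openin_subset by blast
    fix x assume x: "x \<in> topspace X"
    show "\<exists>V. openin X V \<and> x \<in> V \<and> finite {U \<in> \<U>'. U \<inter> V \<noteq> {}}"
    proof (cases "x \<in> Y")
      case True
      with x have "x \<in> topspace (subtopology X Y)" by simp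
      with lf obtain V where V: "openin (subtopology X Y) V" "x \<in> V"
        "finite {U\<in>\<U>. U \<inter> V \<noteq> {}}"
        unfolding locally_finite_in_def by blast
      then obtain W where W: "openin X W" "V = W \<inter> Y" by (auto simp: openin_subtopology)
      have "{U \<in> \<U>'. U \<inter> W \<noteq> {}} \<subseteq> {U\<in>\<U>. U \<inter> V \<noteq> {}}"
        using sub W(2) unfolding \<U>'_def by blast
      then show ?thesis using W V finite_subset by blast
    next
      case False
      have "{U \<in> \<U>'. U \<inter> (topspace X - Y) \<noteq> {}} = {}"
        using sub unfolding \<U>'_def by blast
      then show ?thesis using False x Y by (metis DiffI closedin_def finite.emptyI)
    qed
  qed
  then have "finite \<U>'" using pc opn' unfolding pseudocompact_space_def by blast
  moreover have "\<U> = \<U>' \<union> {U\<in>\<U>. p \<in> U}" unfolding \<U>'_def by blast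
  ultimately show "finite \<U>" using through_p by (metis finite_Un)
qed

definition brandt_cell ::
  "('i \<Rightarrow> 's set) \<Rightarrow> ('i \<Rightarrow> 's) \<Rightarrow> 'i \<Rightarrow> 'c \<Rightarrow> 'c \<Rightarrow> ('i, 'c, 's) osum set" where
  "brandt_cell T z i a b = {OEl i a s b | s. s \<in> T i \<and> s \<noteq> z i}"

lemma OZero_notin_brandt_cell [simp]: "OZero \<notin> brandt_cell T z i a b"
  by (simp add: brandt_cell_def)

lemma brandt_cell_disjoint:
  "(i, a, b) \<noteq> (j, c, d) \<Longrightarrow> brandt_cell T z i a b \<inter> brandt_cell T z j c d = {}"
  by (auto simp: brandt_cell_def)

lemma brandt_block_eq_cell: "brandt_block T z i a b = insert OZero (brandt_cell T z i a b)"
  by (simp add: brandt_block_def brandt_cell_def)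

lemma brandt_part_eq_cells:
  "brandt_part \<Lambda> T z i = insert OZero (\<Union>(a, b) \<in> \<Lambda> i \<times> \<Lambda> i. brandt_cell T z i a b)"
  by (auto simp: brandt_part_def brandt_cell_def)

lemma osum_carrier_eq_cells:
  "osum_carrier I \<Lambda> T z =
     insert OZero (\<Union>(i, a, b) \<in> (SIGMA i:I. \<Lambda> i \<times> \<Lambda> i). brandt_cell T z i a b)"
  by (auto simp: osum_carrier_def brandt_cell_def)

lemma osum_mult_unit_sandwich:
  assumes "\<forall>s\<in>T i. m i (e i) s = s \<and> m i s (e i) = s"
    and "y \<in> osum_carrier I \<Lambda> T z"
  shows "osum_mult m z (osum_mult m z (OEl i a (e i) a) y) (OEl i b (e i) b) =
           (if y \<in> brandt_cell T z i a b then y else OZero)"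
  using assms by (auto simp: osum_mult_def osum_carrier_def brandt_cell_def split: osum.split)

lemma openin_brandt_cell:
  assumes monoid: "semitop_monoid_zero (\<sigma> i) (T i) (m i) (e i) (z i)"
    and semitop: "semitop_semigroup \<tau> (osum_carrier I \<Lambda> T z) (osum_mult m z)"
    and i: "i \<in> I" and a: "a \<in> \<Lambda> i" and b: "b \<in> \<Lambda> i"
  shows "openin \<tau> (brandt_cell T z i a b)"
proof -
  have unit: "\<forall>s\<in>T i. m i (e i) s = s \<and> m i s (e i) = s"
    and zero: "\<And>s. s \<in> T i \<Longrightarrow> m i (z i) s = z i"
    and "e i \<in> T i"
    using monoid unfolding semitop_monoid_zero_def by auto
  have ts: "topspace \<tau> = osum_carrier I \<Lambda> T z"
    using semitop unfolding semitop_semigroup_def by blast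
  show ?thesis
  proof (cases "e i = z i")
    case True
    \<comment> \<open>then T i is the trivial monoid, since s = e s = z s = z\<close>
    then have "brandt_cell T z i a b = {}"
      using unit zero unfolding brandt_cell_def by force
    then show ?thesis by simp
  next
    case False
    define E where "E = OEl i a (e i) a"
    define F where "F = OEl i b (e i) b"
    define f where "f = (\<lambda>y. osum_mult m z (osum_mult m z E y) F)"
    have "E \<in> topspace \<tau>" "F \<in> topspace \<tau>"
      unfolding ts E_def F_def osum_carrier_def using i a b \<open>e i \<in> T i\<close> False by auto
    moreover have "\<forall>x\<in>topspace \<tau>. continuous_map \<tau> \<tau> (osum_mult m z x) \<and>
        continuous_map \<tau> \<tau> (\<lambda>y. osum_mult m z y x)"
      using semitop ts unfolding semitop_semigroup_def by simp
    ultimately have "continuous_map \<tau> \<tau> ((\<lambda>y. osum_mult m z y F) \<circ> osum_mult m z E)"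
      using continuous_map_compose by blast
    then have cont: "continuous_map \<tau> \<tau> f"
      by (simp add: f_def o_def)
    have "t1_space \<tau>"
      using semitop Hausdorff_imp_t1_space unfolding semitop_semigroup_def by blast
    moreover have "OZero \<in> topspace \<tau>"
      by (simp add: ts osum_carrier_def)
    ultimately have "openin \<tau> (topspace \<tau> - {OZero})"
      by (simp add: closedin_t1_singleton openin_diff)
    with cont have "openin \<tau> {y \<in> topspace \<tau>. f y \<in> topspace \<tau> - {OZero}}"
      by (rule openin_continuous_map_preimage)
    moreover have "{y \<in> topspace \<tau>. f y \<in> topspace \<tau> - {OZero}} = brandt_cell T z i a b"
    proof -
      have f_eq: "f y = (if y \<in> brandt_cell T z i a b then y else OZero)" if "y \<in> topspace \<tau>" for y
        using that unfolding f_def E_def F_def ts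
        by (simp add: osum_mult_unit_sandwich[of T i m e, OF unit])
      have "brandt_cell T z i a b \<subseteq> topspace \<tau>"
        using i a b unfolding ts osum_carrier_eq_cells by blast
      then show ?thesis
        using f_eq by (fastforce split: if_splits)
    qed
    ultimately show ?thesis by simp
  qed
qed

lemma pseudocompact_space_cells_union:
  assumes monoids: "\<forall>i\<in>I. semitop_monoid_zero (\<sigma> i) (T i) (m i) (e i) (z i)"
    and semitop: "semitop_semigroup \<tau> (osum_carrier I \<Lambda> T z) (osum_mult m z)"
    and pseudo: "pseudocompact_space \<tau>"
    and K: "K \<subseteq> (SIGMA i:I. \<Lambda> i \<times> \<Lambda> i)"
  shows "pseudocompact_space
           (subtopology \<tau> (insert OZero (\<Union>(i, a, b) \<in> K. brandt_cell T z i a b)))"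
proof (rule pseudocompact_space_closedin_punctured_open[OF pseudo _ insertI1])
  let ?\<Sigma> = "SIGMA i:I. \<Lambda> i \<times> \<Lambda> i"
  let ?cells = "\<lambda>L. \<Union>(i, a, b) \<in> L. brandt_cell T z i a b"
  have ts: "topspace \<tau> = insert OZero (?cells ?\<Sigma>)"
    using semitop osum_carrier_eq_cells unfolding semitop_semigroup_def by metis
  have opn: "openin \<tau> (?cells L)" if "L \<subseteq> ?\<Sigma>" for L
  proof (rule openin_Union, clarify)
    fix i a b assume "(i, a, b) \<in> L"
    with that monoids show "openin \<tau> (brandt_cell T z i a b)"
      by (auto intro: openin_brandt_cell[OF _ semitop])
  qed
  have "insert OZero (?cells K) - {OZero} = ?cells K"
    by auto
  then show "openin \<tau> (insert OZero (?cells K) - {OZero})"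
    using opn[OF K] by simp
  have "topspace \<tau> - insert OZero (?cells K) = ?cells (?\<Sigma> - K)"
  proof (intro set_eqI iffI)
    fix x assume "x \<in> topspace \<tau> - insert OZero (?cells K)"
    then show "x \<in> ?cells (?\<Sigma> - K)" unfolding ts by blast
  next
    fix x assume "x \<in> ?cells (?\<Sigma> - K)"
    then obtain j c d where jcd: "(j, c, d) \<in> ?\<Sigma> - K" "x \<in> brandt_cell T z j c d"
      by blast
    then have "x \<notin> brandt_cell T z i a b" if "(i, a, b) \<in> K" for i a b
      using brandt_cell_disjoint[of i a b j c d T z] that by blast
    with jcd show "x \<in> topspace \<tau> - insert OZero (?cells K)"
      unfolding ts by auto
  qed
  moreover have "insert OZero (?cells K) \<subseteq> topspace \<tau>"
    unfolding ts using K by blast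
  ultimately show "closedin \<tau> (insert OZero (?cells K))"
    using opn[of "?\<Sigma> - K"] by (simp add: closedin_def)
qed

theorem proposition2p6:
  fixes I :: "'i set" and \<Lambda> :: "'i \<Rightarrow> 'c set" and T :: "'i \<Rightarrow> 's set"
    and m :: "'i \<Rightarrow> 's \<Rightarrow> 's \<Rightarrow> 's" and e z :: "'i \<Rightarrow> 's"
    and \<sigma> :: "'i \<Rightarrow> 's topology" and \<tau> :: "('i, 'c, 's) osum topology"
  assumes monoids: "\<forall>i\<in>I. semitop_monoid_zero (\<sigma> i) (T i) (m i) (e i) (z i)"
    and semitop: "semitop_semigroup \<tau> (osum_carrier I \<Lambda> T z) (osum_mult m z)"
    and pseudo: "pseudocompact_space \<tau>"
    and brandt: "\<forall>i\<in>I. topological_brandt_ext \<tau> \<Lambda> T m z \<sigma> i"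
  shows "(\<forall>i\<in>I. pseudocompact_space (subtopology \<tau> (brandt_part \<Lambda> T z i))) \<and>
         (\<forall>i\<in>I. \<forall>a\<in>\<Lambda> i. \<forall>b\<in>\<Lambda> i.
            pseudocompact_space (subtopology \<tau> (brandt_block T z i a b)))"
proof (intro conjI ballI)
  note cells = pseudocompact_space_cells_union[OF monoids semitop pseudo]
  fix i assume i: "i \<in> I"
  have "(\<Union>(a, b) \<in> \<Lambda> i \<times> \<Lambda> i. brandt_cell T z i a b) =
      (\<Union>(j, a, b) \<in> {i} \<times> (\<Lambda> i \<times> \<Lambda> i). brandt_cell T z j a b)"
    by auto
  then show "pseudocompact_space (subtopology \<tau> (brandt_part \<Lambda> T z i))"
    using cells[of "{i} \<times> (\<Lambda> i \<times> \<Lambda> i)"] i by (auto simp: brandt_part_eq_cells)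
  fix a b assume "a \<in> \<Lambda> i" "b \<in> \<Lambda> i"
  then show "pseudocompact_space (subtopology \<tau> (brandt_block T z i a b))"
    using cells[of "{(i, a, b)}"] i by (simp add: brandt_block_eq_cell)
qed

end
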